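(* Let $\varphi:\mathbb{D}\to\mathbb{D}$ be an inner function with $\varphi(0)\neq 0$, and let $C_\varphi f=f\circ\varphi$ be the corresponding composition operator on $H^2(\mathbb{D})$. Then for $f\in H^2(\mathbb{D})$, $$\|C_\varphi f\|=\sqrt{\frac{1+|\varphi(0)|}{1-|\varphi(0)|}}\;\|f\|$$ holds if and only if $f\equiv 0$. In particular, the operator norm $\|C_\varphi\|=\sqrt{\frac{1+|\varphi(0)|}{1-|\varphi(0)|}}$ is not attained by any nonzero function of $H^2(\mathbb{D})$.
   Context: $\mathbb{D}$ is the open unit disc. $H^2(\mathbb{D})$ is the Hardy space of holomorphic $f(z)=\sum_{n\ge0}a_nz^n$ on $\mathbb{D}$ with $\|f\|^2=\sum_{n\ge0}|a_n|^2<\infty$. An inner function is a holomorphic map $\varphi:\mathbb{D}\to\mathbb{D}$ whose radial limits satisfy $|\varphi(e^{i\theta})|=1$ for almost every $\theta\in[0,2\pi)$. For an inner function $\varphi$ it is known that $\|C_\varphi\|=\sqrt{(1+|\varphi(0)|)/(1-|\varphi(0)|)}$. *)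

theory Defs
  imports "HOL-Analysis.Analysis"
begin

abbreviation unit_disc :: "complex set" where
  "unit_disc \<equiv> ball 0 1"

definition taylor_coeff :: "(complex \<Rightarrow> complex) \<Rightarrow> nat \<Rightarrow> complex" where
  "taylor_coeff f n = (deriv ^^ n) f 0 / of_nat (fact n)"

definition H2 :: "(complex \<Rightarrow> complex) set" where
  "H2 = {f. f holomorphic_on unit_disc \<and> summable (\<lambda>n. (cmod (taylor_coeff f n))\<^sup>2)}"

definition H2_norm :: "(complex \<Rightarrow> complex) \<Rightarrow> real" where
  "H2_norm f = sqrt (\<Sum>n. (cmod (taylor_coeff f n))\<^sup>2)"

definition inner_function :: "(complex \<Rightarrow> complex) \<Rightarrow> bool" where
  "inner_function \<phi> \<longleftrightarrow>
     \<phi> holomorphic_on unit_disc \<and> \<phi> ` unit_disc \<subseteq> unit_disc \<and>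
     (AE \<theta> in lebesgue_on {0..<2*pi}.
        \<exists>L. ((\<lambda>r::real. \<phi> (complex_of_real r * cis \<theta>)) \<longlongrightarrow> L) (at_left 1) \<and> cmod L = 1)"

end

theory Submission
  imports Defs "HOL-Complex_Analysis.Complex_Analysis"
begin

text \<open>
  Write \<open>a = \<phi> 0\<close>. Littlewood's subordination principle, in the form that keeps the Poisson
  kernel, bounds the circle means of \<open>f \<circ> \<phi>\<close> by the integral of \<open>|f|\<^sup>2\<close> against the
  Poisson kernel \<open>P\<^sub>a\<close> over the unit circle; it is applied to the dilations \<open>f (\<rho> z)\<close>, which
  avoids boundary values of \<open>H\<^sup>2\<close> functions. \<open>P\<^sub>a\<close> never exceeds \<open>(1 + |a|) / (1 - |a|)\<close> and
  falls below it by a multiple of \<open>|z - a / |a||\<^sup>2\<close>. A nonzero \<open>f\<close> cannot put all its mass near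
  the single point \<open>a / |a|\<close>, so \<open>\<parallel>f \<circ> \<phi>\<parallel>\<^sup>2 \<le> (1 + |a|) / (1 - |a|) \<parallel>f\<parallel>\<^sup>2 - \<delta>\<close> with \<open>\<delta> > 0\<close>.
\<close>

definition cis2pi :: "real \<Rightarrow> complex" where
  "cis2pi t = exp (2 * of_real pi * \<i> * of_real t)"

lemma norm_cis2pi [simp]: "cmod (cis2pi t) = 1"
  unfolding cis2pi_def by (simp add: norm_exp_eq_Re)

lemma cis2pi_nonzero [simp]: "cis2pi t \<noteq> 0"
  unfolding cis2pi_def by simp

lemma continuous_on_cis2pi [continuous_intros]:
  "continuous_on A f \<Longrightarrow> continuous_on A (\<lambda>x. cis2pi (f x))"
  unfolding cis2pi_def by (intro continuous_intros)

lemma cis2pi_power_mult_cnj_power: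
  "cis2pi t ^ m * cnj (cis2pi t) ^ n = exp (2 * of_real pi * \<i> * of_int (int m - int n) * of_real t)"
proof -
  have "cis2pi t ^ k = exp (of_nat k * (2 * of_real pi * \<i> * of_real t))" for k
    unfolding cis2pi_def by (simp add: exp_of_nat_mult)
  moreover have "cnj (cis2pi t) = inverse (cis2pi t)"
    unfolding cis2pi_def by (simp add: exp_cnj exp_minus)
  ultimately show ?thesis
    by (simp add: power_inverse exp_minus[symmetric] exp_add[symmetric] algebra_simps)
qed

lemma has_integral_exp_2pi_int:
  fixes k :: int
  assumes "k \<noteq> 0"
  shows "((\<lambda>t. exp (2 * of_real pi * \<i> * of_int k * of_real t)) has_integral 0) {0..1::real}"
proof -
  define c where "c = 2 * of_real pi * \<i> * (of_int k :: complex)"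
  have "c \<noteq> 0" using assms by (simp add: c_def)
  have "((\<lambda>t. exp (c * of_real t)) has_integral (exp (c * of_real 1) / c - exp (c * of_real 0) / c))
          {0..1::real}"
  proof (rule fundamental_theorem_of_calculus)
    fix x :: real
    have "((\<lambda>z. exp (c * z) / c) has_field_derivative exp (c * of_real x)) (at (of_real x))"
      using \<open>c \<noteq> 0\<close> by (auto intro!: derivative_eq_intros)
    then show "((\<lambda>t. exp (c * of_real t) / c) has_vector_derivative exp (c * of_real x))
                 (at x within {0..1})"
      by (rule has_vector_derivative_real_field)
  qed simp
  moreover have "exp c = 1"
    using exp_integer_2pi[of "of_int k"] by (simp add: c_def algebra_simps)
  ultimately show ?thesis by (simp add: c_def)
qed

lemma has_integral_cis2pi_power_mult_cnj_power:
  "((\<lambda>t. cis2pi t ^ m * cnj (cis2pi t) ^ n) has_integral (if m = n then 1 else 0)) {0..1}"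
proof (cases "m = n")
  case True
  then show ?thesis
    using has_integral_const_real[of "1::complex" 0 1] by (simp add: cis2pi_power_mult_cnj_power)
next
  case False
  then show ?thesis
    using has_integral_exp_2pi_int[of "int m - int n"] by (simp add: cis2pi_power_mult_cnj_power)
qed

lemma taylor_coeff_sums:
  assumes "g holomorphic_on ball 0 R" "cmod w < R"
  shows "(\<lambda>n. taylor_coeff g n * w ^ n) sums g w"
  using holomorphic_power_series[OF assms(1), of w] assms(2) by (simp add: taylor_coeff_def)

lemma taylor_coeff_eq_0:
  assumes "\<And>z. z \<in> ball 0 1 \<Longrightarrow> g z = 0"
  shows "taylor_coeff g n = 0"
proof -
  have "eventually (\<lambda>z. g z = 0) (nhds 0)"
    using eventually_nhds_in_open[of "ball 0 1" 0] assms by (auto elim!: eventually_mono)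
  then have "(deriv ^^ n) g 0 = (deriv ^^ n) (\<lambda>_. 0) 0" by (rule higher_deriv_cong_ev) simp
  then show ?thesis by (simp add: taylor_coeff_def)
qed

lemma continuous_on_comp_circle:
  assumes "continuous_on (ball 0 R) g" "0 \<le> r" "r < R"
  shows "continuous_on A (\<lambda>t. g (of_real r * cis2pi t))"
  using assms(1)
  by (rule continuous_on_compose2) (use assms(2,3) in \<open>auto intro!: continuous_intros simp: norm_mult\<close>)

definition circle_mean :: "(complex \<Rightarrow> complex) \<Rightarrow> real \<Rightarrow> real" where
  "circle_mean g r = integral {0..1} (\<lambda>t. (cmod (g (of_real r * cis2pi t)))\<^sup>2)"

lemma has_integral_norm_sq_polynomial_circle:
  "((\<lambda>t. (\<Sum>i<n. b i * (of_real r * cis2pi t) ^ i) * cnj (\<Sum>i<n. b i * (of_real r * cis2pi t) ^ i))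
     has_integral of_real (\<Sum>i<n. (cmod (b i))\<^sup>2 * r ^ (2 * i))) {0..1}"
proof -
  have expand: "(\<Sum>i<n. b i * (of_real r * cis2pi t) ^ i) * cnj (\<Sum>i<n. b i * (of_real r * cis2pi t) ^ i)
     = (\<Sum>j<n. \<Sum>i<n. (b i * cnj (b j) * of_real r ^ (i + j)) * (cis2pi t ^ i * cnj (cis2pi t) ^ j))" for t
    by (simp add: sum_distrib_left sum_distrib_right power_mult_distrib power_add algebra_simps)
  have "((\<lambda>t. \<Sum>j<n. \<Sum>i<n. (b i * cnj (b j) * of_real r ^ (i + j)) * (cis2pi t ^ i * cnj (cis2pi t) ^ j))
     has_integral (\<Sum>j<n. \<Sum>i<n. (b i * cnj (b j) * of_real r ^ (i + j)) * (if i = j then 1 else 0))) {0..1}"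
    by (intro has_integral_sum finite_lessThan has_integral_mult_right
          has_integral_cis2pi_power_mult_cnj_power)
  also have "(\<Sum>j<n. \<Sum>i<n. (b i * cnj (b j) * of_real r ^ (i + j)) * (if i = j then 1 else 0))
     = (\<Sum>i<n. b i * cnj (b i) * of_real r ^ (2 * i))"
    by (simp add: if_distrib[where f="\<lambda>x. _ * x"] sum.delta mult_2 cong: if_cong)
  also have "\<dots> = of_real (\<Sum>i<n. (cmod (b i))\<^sup>2 * r ^ (2 * i))"
    using complex_norm_square[symmetric, of "b _"]
    by (simp only: of_real_sum of_real_mult of_real_power)
  finally show ?thesis unfolding expand .
qed

lemma uniform_limit_taylor_polynomials_circle:
  assumes hol: "g holomorphic_on ball 0 R" and r: "0 \<le> r" "r < R"
  shows "uniform_limit {0..1} (\<lambda>n t. \<Sum>i<n. taylor_coeff g i * (of_real r * cis2pi t) ^ i)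
           (\<lambda>t. g (of_real r * cis2pi t)) sequentially"
proof -
  define b where "b = taylor_coeff g"
  have sums: "(\<lambda>n. b n * w ^ n) sums g w" if "cmod w < R" for w
    unfolding b_def using hol that by (rule taylor_coeff_sums)
  have "ereal R \<le> conv_radius b"
  proof (rule conv_radius_geI_ex')
    fix r' :: real assume "0 < r'" "ereal r' < ereal R"
    then show "summable (\<lambda>n. b n * of_real r' ^ n)"
      using sums[of "of_real r'"] by (auto simp: sums_iff)
  qed
  then have "uniform_limit (cball 0 r) (\<lambda>n x. \<Sum>i<n. b i * (x - 0) ^ i)
       (\<lambda>x. suminf (\<lambda>i. b i * (x - 0) ^ i)) sequentially"
    using r by (intro powser_uniform_limit less_le_trans[OF _ \<open>ereal R \<le> conv_radius b\<close>]) simp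
  then have "uniform_limit {0..1} (\<lambda>n t. \<Sum>i<n. b i * (of_real r * cis2pi t - 0) ^ i)
       (\<lambda>t. suminf (\<lambda>i. b i * (of_real r * cis2pi t - 0) ^ i)) sequentially"
    by (rule uniform_limit_compose') (use r in \<open>auto simp: norm_mult\<close>)
  moreover have "suminf (\<lambda>i. b i * (of_real r * cis2pi t) ^ i) = g (of_real r * cis2pi t)" for t
    using sums[of "of_real r * cis2pi t"] r by (simp add: sums_iff norm_mult)
  ultimately show ?thesis by (simp add: b_def)
qed

text \<open>Parseval's identity on the circle of radius \<open>r\<close>: integrate the uniformly convergent
  products of Taylor polynomials with their conjugates term by term.\<close>
lemma circle_mean_sums:
  assumes hol: "g holomorphic_on ball 0 R" and r: "0 \<le> r" "r < R"
  shows "(\<lambda>n. (cmod (taylor_coeff g n))\<^sup>2 * r ^ (2 * n)) sums circle_mean g r"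
proof -
  define P where "P = (\<lambda>n t. \<Sum>i<n. taylor_coeff g i * (of_real r * cis2pi t) ^ i)"
  have "continuous_on {0..1} (\<lambda>t. g (of_real r * cis2pi t))"
    using holomorphic_on_imp_continuous_on[OF hol] r by (rule continuous_on_comp_circle)
  then have "bounded ((\<lambda>t. g (of_real r * cis2pi t)) ` {0..1})"
       and "bounded ((\<lambda>t. cnj (g (of_real r * cis2pi t))) ` {0..1})"
    by (intro compact_imp_bounded compact_continuous_image continuous_intros; simp)+
  then have "uniform_limit {0..1} (\<lambda>n t. P n t * cnj (P n t))
     (\<lambda>t. g (of_real r * cis2pi t) * cnj (g (of_real r * cis2pi t))) sequentially"
    using uniform_limit_taylor_polynomials_circle[OF hol r] unfolding P_def
    by (intro uniform_lim_mult bounded_linear.uniform_limit[OF bounded_linear_cnj])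
  then obtain I J
    where I: "\<And>n. ((\<lambda>t. P n t * cnj (P n t)) has_integral I n) {0..1}"
      and J: "((\<lambda>t. g (of_real r * cis2pi t) * cnj (g (of_real r * cis2pi t))) has_integral J) {0..1}"
      and "I \<longlonglongrightarrow> J"
    by (rule uniform_limit_integral) (auto simp: P_def intro!: continuous_intros)
  have "I n = of_real (\<Sum>i<n. (cmod (taylor_coeff g i))\<^sup>2 * r ^ (2 * i))" for n
    using has_integral_unique[OF I] has_integral_norm_sq_polynomial_circle unfolding P_def by blast
  moreover have "circle_mean g r = Re J"
    using has_integral_Re[OF J] unfolding circle_mean_def
    by (simp add: complex_norm_square[symmetric] integral_unique del: complex_mult_cnj)
  ultimately show ?thesis
    using tendsto_Re[OF \<open>I \<longlonglongrightarrow> J\<close>] unfolding sums_def by simp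
qed

lemma circle_mean_le_suminf:
  assumes "g holomorphic_on ball 0 1" "summable (\<lambda>n. (cmod (taylor_coeff g n))\<^sup>2)" "0 \<le> r" "r < 1"
  shows "circle_mean g r \<le> (\<Sum>n. (cmod (taylor_coeff g n))\<^sup>2)"
proof (rule sums_le[OF _ circle_mean_sums[OF assms(1,3,4)] summable_sums[OF assms(2)]])
  fix n
  have "r ^ (2 * n) \<le> 1" using assms(3,4) by (simp add: power_le_one)
  then show "(cmod (taylor_coeff g n))\<^sup>2 * r ^ (2 * n) \<le> (cmod (taylor_coeff g n))\<^sup>2"
    by (simp add: mult_left_le)
qed

lemma circle_mean_mono:
  assumes "g holomorphic_on ball 0 1" "0 \<le> r1" "r1 \<le> r2" "r2 < 1"
  shows "circle_mean g r1 \<le> circle_mean g r2"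
proof (rule sums_le[OF _ circle_mean_sums[OF assms(1,2)] circle_mean_sums[OF assms(1)]])
  fix n
  show "(cmod (taylor_coeff g n))\<^sup>2 * r1 ^ (2 * n) \<le> (cmod (taylor_coeff g n))\<^sup>2 * r2 ^ (2 * n)"
    using assms by (intro mult_left_mono power_mono) auto
qed (use assms in auto)

lemma circle_mean_pos:
  assumes hol: "g holomorphic_on ball 0 1" and z: "z \<in> ball 0 1" "g z \<noteq> 0" and r: "0 < r" "r < 1"
  shows "0 < circle_mean g r"
proof -
  have "\<exists>n. taylor_coeff g n \<noteq> 0"
  proof (rule ccontr)
    assume "\<nexists>n. taylor_coeff g n \<noteq> 0"
    then have "(\<lambda>n. 0) sums g z" using taylor_coeff_sums[OF hol, of z] z by simp
    with z show False by (metis sums_zero sums_unique2)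
  qed
  then obtain n where n: "taylor_coeff g n \<noteq> 0" by blast
  note sums = circle_mean_sums[OF hol less_imp_le[OF r(1)] r(2)]
  show ?thesis
    unfolding sums_unique[OF sums]
    by (rule suminf_pos2[of _ n]) (use sums_summable[OF sums] n r in auto)
qed

lemma has_integral_circlepath_param:
  assumes "(f has_contour_integral I) (circlepath 0 r)"
  shows "((\<lambda>t. f (of_real r * cis2pi t) * (2 * of_real pi * \<i> * (of_real r * cis2pi t)))
           has_integral I) {0..1}"
  using assms unfolding has_contour_integral_def
proof (rule has_integral_eq[rotated])
  fix x :: real assume "x \<in> {0..1}"
  then have "vector_derivative (circlepath 0 r) (at x within {0..1}) = 2 * pi * \<i> * r * cis2pi x"
    by (simp add: vector_derivative_circlepath01 cis2pi_def)
  moreover have "circlepath 0 r x = of_real r * cis2pi x" by (simp add: circlepath cis2pi_def)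
  ultimately show "f (circlepath 0 r x) * vector_derivative (circlepath 0 r) (at x within {0..1}) =
      f (of_real r * cis2pi x) * (2 * of_real pi * \<i> * (of_real r * cis2pi x))"
    by (simp add: algebra_simps)
qed

lemma has_integral_circle_mean_value:
  assumes hol: "H holomorphic_on ball 0 R" and r: "0 \<le> r" "r < R"
  shows "((\<lambda>t. H (of_real r * cis2pi t)) has_integral H 0) {0..1}"
proof (cases "r = 0")
  case True
  then show ?thesis using has_integral_const_real[of "H 0" 0 1] by simp
next
  case False
  then have "r > 0" using r by simp
  have "cball 0 r \<subseteq> ball 0 R" "ball 0 r \<subseteq> ball 0 R" using r by auto
  then have "((\<lambda>u. H u / (u - 0)) has_contour_integral (2 * of_real pi * \<i> * H 0)) (circlepath 0 r)"
    using \<open>r > 0\<close>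
    by (intro Cauchy_integral_circlepath holomorphic_on_imp_continuous_on holomorphic_on_subset[OF hol])
      auto
  from has_integral_circlepath_param[OF this]
  have "((\<lambda>t. 2 * of_real pi * \<i> * H (of_real r * cis2pi t)) has_integral (2 * of_real pi * \<i> * H 0))
          {0..1}"
    by (rule has_integral_eq[rotated]) (use \<open>r > 0\<close> in simp)
  from has_integral_mult_right[OF this, of "1 / (2 * of_real pi * \<i>)"] show ?thesis by simp
qed

definition poisson_kernel :: "complex \<Rightarrow> complex \<Rightarrow> real" where
  "poisson_kernel w z = (1 - (cmod w)\<^sup>2) / (cmod (z - w))\<^sup>2"

lemma poisson_kernel_nonneg: "cmod w < 1 \<Longrightarrow> 0 \<le> poisson_kernel w z"
  unfolding poisson_kernel_def by (intro divide_nonneg_nonneg) (auto simp: abs_square_less_1 power_le_one)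

lemma Re_cayley_eq_poisson_kernel:
  assumes "cmod z = 1"
  shows "Re ((z + w) / (z - w)) = poisson_kernel w z"
proof -
  have z: "(Re z)\<^sup>2 + (Im z)\<^sup>2 = 1" using assms by (simp add: cmod_def)
  have "Re ((z + w) / (z - w)) =
      ((Re z + Re w) * (Re z - Re w) + (Im z + Im w) * (Im z - Im w)) / (cmod (z - w))\<^sup>2"
    by (simp add: Re_divide cmod_power2)
  also have "(Re z + Re w) * (Re z - Re w) + (Im z + Im w) * (Im z - Im w) = 1 - (cmod w)\<^sup>2"
    using z cmod_power2[of w] by (simp add: algebra_simps power2_eq_square)
  finally show ?thesis by (simp add: poisson_kernel_def)
qed

text \<open>On the unit circle the Poisson kernel splits into the Cauchy kernel at \<open>w\<close> and a
  function holomorphic on a disc beyond the unit circle, whose contour integral vanishes.\<close>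
lemma poisson_kernel_eq_cauchy_kernel_plus:
  assumes z: "cmod z = 1" and w: "cmod w < 1"
  shows "z / (z - w) + cnj w * z / (1 - cnj w * z) = of_real (poisson_kernel w z)"
proof -
  have "z - w \<noteq> 0" "z \<noteq> 0" using z w by auto
  have zc: "z * cnj z = 1" using z by (simp add: complex_norm_square[symmetric])
  have "1 - cnj w * z = z * cnj (z - w)" using zc by (simp add: algebra_simps)
  then have "z / (z - w) + cnj w * z / (1 - cnj w * z) = z / (z - w) + cnj w / cnj (z - w)"
    using \<open>z \<noteq> 0\<close> by simp
  also have "\<dots> = (z * cnj (z - w) + cnj w * (z - w)) / ((z - w) * cnj (z - w))"
    using \<open>z - w \<noteq> 0\<close> by (simp add: field_simps)
  also have "z * cnj (z - w) + cnj w * (z - w) = 1 - w * cnj w"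
    using zc by (simp add: algebra_simps)
  also have "(z - w) * cnj (z - w) = of_real ((cmod (z - w))\<^sup>2)"
    by (rule complex_norm_square[symmetric])
  also have "1 - w * cnj w = of_real (1 - (cmod w)\<^sup>2)"
    by (simp only: of_real_diff of_real_1 complex_norm_square)
  finally show ?thesis by (simp add: poisson_kernel_def)
qed

lemma has_contour_integral_reflected_kernel_eq_0:
  assumes hol: "g holomorphic_on ball 0 R" and R: "1 < R" and w: "cmod w < 1"
  shows "((\<lambda>u. g u * (cnj w / (1 - cnj w * u))) has_contour_integral 0) (circlepath 0 1)"
proof -
  define R' where "R' = min R (2 / (1 + cmod w))"
  have "0 < 1 + cmod w" by (simp add: add_pos_nonneg)
  then have "1 < 2 / (1 + cmod w)" using w by (simp add: less_divide_eq)
  then have "1 < R'" using R by (auto simp: R'_def)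
  have "1 - cnj w * u \<noteq> 0" if "u \<in> ball 0 R'" for u
  proof -
    have "cmod w * cmod u \<le> cmod w * (2 / (1 + cmod w))"
      using that by (intro mult_left_mono) (auto simp: R'_def)
    also have "\<dots> < 1" using w \<open>0 < 1 + cmod w\<close> by (simp add: divide_less_eq)
    finally have "cmod (cnj w * u) < 1" by (simp add: norm_mult)
    then show ?thesis by auto
  qed
  moreover have "g holomorphic_on ball 0 R'"
    using hol by (rule holomorphic_on_subset) (auto simp: R'_def)
  ultimately show ?thesis
    using \<open>1 < R'\<close> by (intro Cauchy_theorem_disc_simple[of _ 0 R'] holomorphic_intros) auto
qed

lemma poisson_integral_formula:
  assumes hol: "g holomorphic_on ball 0 R" and R: "1 < R" and w: "cmod w < 1"
  shows "((\<lambda>t. g (cis2pi t) * of_real (poisson_kernel w (cis2pi t))) has_integral g w) {0..1}"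
proof -
  have "cball 0 1 \<subseteq> ball 0 R" "ball 0 1 \<subseteq> ball 0 R" using R by auto
  then have "((\<lambda>u. g u / (u - w)) has_contour_integral (2 * of_real pi * \<i> * g w)) (circlepath 0 1)"
    using w
    by (intro Cauchy_integral_circlepath holomorphic_on_imp_continuous_on holomorphic_on_subset[OF hol])
      auto
  from has_integral_add[OF this[THEN has_integral_circlepath_param]
      has_contour_integral_reflected_kernel_eq_0[OF hol R w, THEN has_integral_circlepath_param]]
  have "((\<lambda>t. 2 * of_real pi * \<i> * (g (cis2pi t) * of_real (poisson_kernel w (cis2pi t))))
           has_integral (2 * of_real pi * \<i> * g w + 0)) {0..1}"
  proof (rule has_integral_eq[rotated])
    have "g u / (u - w) * (k * u) + g u * (cnj w / (1 - cnj w * u)) * (k * u)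
          = k * (g u * of_real (poisson_kernel w u))" if "cmod u = 1" for u k
      unfolding poisson_kernel_eq_cauchy_kernel_plus[OF that w, symmetric] by (simp add: algebra_simps)
    then show "g (of_real 1 * cis2pi t) / (of_real 1 * cis2pi t - w) * (k * (of_real 1 * cis2pi t)) +
          g (of_real 1 * cis2pi t) * (cnj w / (1 - cnj w * (of_real 1 * cis2pi t))) *
            (k * (of_real 1 * cis2pi t)) = k * (g (cis2pi t) * of_real (poisson_kernel w (cis2pi t)))"
      for t k
      by (simp only: of_real_1 mult_1_left norm_cis2pi)
  qed
  from has_integral_mult_right[OF this, of "1 / (2 * of_real pi * \<i>)"] show ?thesis by simp
qed

lemma norm_sq_le_weighted_integral:
  fixes h :: "real \<Rightarrow> complex"
  assumes hP: "((\<lambda>t. h t * of_real (P t)) has_integral c) S"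
    and P: "(P has_integral 1) S" and P_nonneg: "\<And>t. t \<in> S \<Longrightarrow> 0 \<le> P t"
    and int: "(\<lambda>t. (cmod (h t))\<^sup>2 * P t) integrable_on S"
  shows "(cmod c)\<^sup>2 \<le> integral S (\<lambda>t. (cmod (h t))\<^sup>2 * P t)"
proof -
  define Q where "Q = integral S (\<lambda>t. (cmod (h t))\<^sup>2 * P t)"
  have pointwise: "(cmod (h t - c))\<^sup>2 * P t =
      (cmod (h t))\<^sup>2 * P t - 2 * Re (cnj c * (h t * of_real (P t))) + (cmod c)\<^sup>2 * P t" for t
    unfolding cmod_power2 by (simp add: power2_eq_square algebra_simps)
  have total: "Q - 2 * Re (cnj c * c) + (cmod c)\<^sup>2 * 1 = Q - (cmod c)\<^sup>2"
    unfolding cmod_power2 by (simp add: power2_eq_square)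
  have "((\<lambda>t. (cmod (h t - c))\<^sup>2 * P t) has_integral (Q - (cmod c)\<^sup>2)) S"
    unfolding pointwise total[symmetric] unfolding Q_def
    by (intro has_integral_add has_integral_diff has_integral_mult_right has_integral_Re hP P
        integrable_integral[OF int])
  then have "0 \<le> Q - (cmod c)\<^sup>2"
    by (rule has_integral_nonneg) (simp add: P_nonneg)
  then show ?thesis unfolding Q_def by simp
qed

lemma continuous_on_poisson_kernel_circle:
  assumes "cmod w < 1"
  shows "continuous_on A (\<lambda>t. poisson_kernel w (cis2pi t))"
proof -
  have "cis2pi t \<noteq> w" for t using assms norm_cis2pi[of t] by auto
  then show ?thesis unfolding poisson_kernel_def by (intro continuous_intros) auto
qed

lemma norm_sq_le_poisson_integral:
  assumes hol: "g holomorphic_on ball 0 R" and R: "1 < R" and w: "cmod w < 1"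
  shows "(cmod (g w))\<^sup>2 \<le> integral {0..1} (\<lambda>t. (cmod (g (cis2pi t)))\<^sup>2 * poisson_kernel w (cis2pi t))"
proof (rule norm_sq_le_weighted_integral)
  show "((\<lambda>t. g (cis2pi t) * of_real (poisson_kernel w (cis2pi t))) has_integral g w) {0..1}"
    using hol R w by (rule poisson_integral_formula)
  show "((\<lambda>t. poisson_kernel w (cis2pi t)) has_integral 1) {0..1}"
    using has_integral_Re[OF poisson_integral_formula[of "\<lambda>_. 1" R w]] R w by simp
  show "0 \<le> poisson_kernel w (cis2pi t)" for t
    using w by (rule poisson_kernel_nonneg)
  have "continuous_on {0..1} (\<lambda>t. g (cis2pi t))"
    using continuous_on_comp_circle[OF holomorphic_on_imp_continuous_on[OF hol] _ R] by simp
  then show "(\<lambda>t. (cmod (g (cis2pi t)))\<^sup>2 * poisson_kernel w (cis2pi t)) integrable_on {0..1}"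
    using w by (auto intro!: integrable_continuous_interval continuous_intros
        continuous_on_poisson_kernel_circle)
qed

lemma has_integral_poisson_kernel_mean_value:
  assumes hol: "\<psi> holomorphic_on ball 0 R" and into: "\<And>z. z \<in> ball 0 R \<Longrightarrow> cmod (\<psi> z) < 1"
    and r: "0 \<le> r" "r < R" and z: "cmod z = 1"
  shows "((\<lambda>s. poisson_kernel (\<psi> (of_real r * cis2pi s)) z) has_integral poisson_kernel (\<psi> 0) z) {0..1}"
proof -
  have "z - \<psi> u \<noteq> 0" if "u \<in> ball 0 R" for u
    using into[OF that] z by auto
  then have "(\<lambda>u. (z + \<psi> u) / (z - \<psi> u)) holomorphic_on ball 0 R"
    by (intro holomorphic_intros hol) auto
  from has_integral_Re[OF has_integral_circle_mean_value[OF this r]]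
  show ?thesis by (simp add: Re_cayley_eq_poisson_kernel[OF z])
qed

lemma continuous_on_poisson_kernel_param:
  assumes W: "continuous_on UNIV W" "\<And>s. cmod (W s) < 1" and h: "continuous_on UNIV h"
  shows "continuous_on UNIV (\<lambda>p. (cmod (h (snd p)))\<^sup>2 * poisson_kernel (W (fst p)) (cis2pi (snd p)))"
proof -
  have "continuous_on UNIV (\<lambda>p. h (snd p))"
    by (rule continuous_on_compose2[OF h continuous_on_snd[OF continuous_on_id]]) simp
  moreover have "continuous_on UNIV (\<lambda>p. W (fst p))"
    by (rule continuous_on_compose2[OF W(1) continuous_on_fst[OF continuous_on_id]]) simp
  moreover have "cis2pi t \<noteq> W s" for s t
    using W(2)[of s] by (metis norm_cis2pi less_irrefl)
  ultimately show ?thesis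
    unfolding poisson_kernel_def by (intro continuous_intros) auto
qed

text \<open>Littlewood subordination with the Poisson kernel kept: average the Poisson bound for
  \<open>|g (\<psi> z)|\<^sup>2\<close> over the circle \<open>|z| = r\<close>, swap the integrals, and use that the
  Poisson kernel at \<open>\<psi> z\<close> is harmonic in \<open>z\<close>.\<close>
lemma circle_mean_comp_le_poisson_integral:
  assumes g: "g holomorphic_on ball 0 R'" "1 < R'"
    and \<psi>: "\<psi> holomorphic_on ball 0 R" "\<And>z. z \<in> ball 0 R \<Longrightarrow> cmod (\<psi> z) < 1"
    and r: "0 \<le> r" "r < R"
  shows "circle_mean (g \<circ> \<psi>) r
           \<le> integral {0..1} (\<lambda>t. (cmod (g (cis2pi t)))\<^sup>2 * poisson_kernel (\<psi> 0) (cis2pi t))"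
proof -
  define W where "W s = \<psi> (of_real r * cis2pi s)" for s
  define F where "F s t = (cmod (g (cis2pi t)))\<^sup>2 * poisson_kernel (W s) (cis2pi t)" for s t
  have W: "cmod (W s) < 1" for s
    unfolding W_def using r by (intro \<psi>(2)) (simp add: norm_mult)
  have cont_W: "continuous_on UNIV W"
    unfolding W_def using holomorphic_on_imp_continuous_on[OF \<psi>(1)] r
    by (rule continuous_on_comp_circle)
  have cont_g: "continuous_on (ball 0 R') g"
    using g(1) by (rule holomorphic_on_imp_continuous_on)
  have "continuous_on UNIV (\<lambda>t. g (cis2pi t))"
    using continuous_on_comp_circle[OF cont_g _ g(2)] by simp
  then have cont_F: "continuous_on UNIV (\<lambda>p. F (fst p) (snd p))"
    unfolding F_def using cont_W W by (rule continuous_on_poisson_kernel_param[rotated 2])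
  have "continuous_on UNIV (\<lambda>s. g (W s))"
    using W g(2) by (intro continuous_on_compose2[OF cont_g cont_W]) (auto intro: less_trans[OF W])
  then have "(\<lambda>s. (cmod (g (W s)))\<^sup>2) integrable_on {0..1}"
    by (intro integrable_continuous_interval continuous_intros) (auto intro: continuous_on_subset)
  moreover have "continuous_on ({0..1} \<times> cbox 0 1) (\<lambda>(s, t). F s t)"
    using continuous_on_subset[OF cont_F] by (simp add: case_prod_beta')
  from integral_continuous_on_param[OF this]
  have "(\<lambda>s. integral {0..1} (F s)) integrable_on {0..1}"
    by (simp add: integrable_continuous_interval)
  moreover have "(cmod (g (W s)))\<^sup>2 \<le> integral {0..1} (F s)" for s
    unfolding F_def using g W by (rule norm_sq_le_poisson_integral)
  ultimately have "circle_mean (g \<circ> \<psi>) r \<le> integral {0..1} (\<lambda>s. integral {0..1} (F s))"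
    unfolding circle_mean_def W_def[symmetric] o_def by (rule integral_le)
  also have "\<dots> = integral {0..1} (\<lambda>t. integral {0..1} (\<lambda>s. F s t))"
    using continuous_on_subset[OF cont_F] integral_swap_continuous[of 0 0 1 1 "\<lambda>s t. F s t"]
    by (simp add: case_prod_beta')
  also have "\<dots> = integral {0..1} (\<lambda>t. (cmod (g (cis2pi t)))\<^sup>2 * poisson_kernel (\<psi> 0) (cis2pi t))"
    unfolding F_def W_def
    using integral_unique[OF has_integral_poisson_kernel_mean_value[OF \<psi> r norm_cis2pi]] by simp
  finally show ?thesis .
qed

lemma holomorphic_self_map_norm_le_on_cball:
  assumes \<phi>: "\<phi> holomorphic_on ball 0 1" "\<phi> ` ball 0 1 \<subseteq> ball 0 1" and r: "r < 1"
  obtains K where "K < 1" and "\<And>z. z \<in> cball 0 r \<Longrightarrow> cmod (\<phi> z) \<le> K"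
proof (cases "0 \<le> r")
  case True
  have "cball 0 r \<subseteq> ball 0 1" using r by auto
  then have "continuous_on (cball 0 r) (\<lambda>z. cmod (\<phi> z))"
    by (intro continuous_intros holomorphic_on_imp_continuous_on holomorphic_on_subset[OF \<phi>(1)])
  then obtain z where z: "z \<in> cball 0 r" and max: "\<And>y. y \<in> cball 0 r \<Longrightarrow> cmod (\<phi> y) \<le> cmod (\<phi> z)"
    using continuous_attains_sup[of "cball 0 r" "\<lambda>z. cmod (\<phi> z)"] True by auto
  have "z \<in> ball 0 1" using z r by simp
  then have "cmod (\<phi> z) < 1" using \<phi>(2) by (metis image_subset_iff mem_ball_0)
  then show ?thesis using max that by blast
next
  case False
  then show ?thesis using that[of 0] by simp
qed

text \<open>The dilation \<open>f (\<rho> z)\<close> is holomorphic beyond the closed unit disc, as the Poisson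
  representation requires, and \<open>\<phi> / \<rho>\<close> still maps the disc of radius \<open>(1 + r) / 2\<close> into the
  unit disc once \<open>\<rho>\<close> exceeds the maximum of \<open>|\<phi>|\<close> there.\<close>
lemma dilated_subordination:
  assumes \<phi>: "\<phi> holomorphic_on ball 0 1" "\<phi> ` ball 0 1 \<subseteq> ball 0 1"
    and f: "f holomorphic_on ball 0 1" and r: "0 \<le> r" "r < 1"
  obtains K where "K < 1" and "\<And>\<rho>. K < \<rho> \<Longrightarrow> \<rho> < 1 \<Longrightarrow> circle_mean (f \<circ> \<phi>) r \<le>
      integral {0..1} (\<lambda>t. (cmod (f (of_real \<rho> * cis2pi t)))\<^sup>2 * poisson_kernel (\<phi> 0 / of_real \<rho>) (cis2pi t))"
proof -
  define r' where "r' = (1 + r) / 2"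
  have r': "r < r'" "r' < 1" using r by (auto simp: r'_def)
  obtain K where "K < 1" and K: "\<And>z. z \<in> cball 0 r' \<Longrightarrow> cmod (\<phi> z) \<le> K"
    using holomorphic_self_map_norm_le_on_cball[OF \<phi> r'(2)] by blast
  have "cmod (\<phi> 0) \<le> K" using K r r' by simp
  then have "0 \<le> K" using norm_ge_zero order_trans by blast
  from \<open>K < 1\<close> show ?thesis
  proof (rule that)
    fix \<rho> :: real assume \<rho>: "K < \<rho>" "\<rho> < 1"
    then have "0 < \<rho>" using \<open>0 \<le> K\<close> by linarith
    define \<psi> where "\<psi> = (\<lambda>w. \<phi> w / of_real \<rho>)"
    define g where "g = (\<lambda>w. f (of_real \<rho> * w))"
    have "\<psi> holomorphic_on ball 0 r'"
      unfolding \<psi>_def using \<open>0 < \<rho>\<close> r'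
      by (intro holomorphic_intros holomorphic_on_subset[OF \<phi>(1)]) auto
    moreover have "cmod (\<psi> w) < 1" if "w \<in> ball 0 r'" for w
    proof -
      have "cmod (\<phi> w) < \<rho>" using K[of w] that \<rho> by simp
      then show ?thesis using \<open>0 < \<rho>\<close> by (simp add: \<psi>_def norm_divide)
    qed
    moreover have "(\<lambda>w. of_real \<rho> * w) ` ball 0 (1 / \<rho>) \<subseteq> ball (0::complex) 1"
    proof (rule image_subsetI)
      fix w :: complex assume "w \<in> ball 0 (1 / \<rho>)"
      then have "\<rho> * cmod w < 1" using \<open>0 < \<rho>\<close> by (simp add: field_simps)
      then show "of_real \<rho> * w \<in> ball 0 1" using \<open>0 < \<rho>\<close> by (simp add: norm_mult)
    qed
    then have "(f \<circ> (\<lambda>w. of_real \<rho> * w)) holomorphic_on ball 0 (1 / \<rho>)"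
      by (intro holomorphic_on_compose_gen[OF _ f]) (auto intro!: holomorphic_intros)
    then have "g holomorphic_on ball 0 (1 / \<rho>)"
      by (simp add: g_def o_def)
    moreover have "1 < 1 / \<rho>" using \<rho> \<open>0 < \<rho>\<close> by (simp add: field_simps)
    ultimately have "circle_mean (g \<circ> \<psi>) r
        \<le> integral {0..1} (\<lambda>t. (cmod (g (cis2pi t)))\<^sup>2 * poisson_kernel (\<psi> 0) (cis2pi t))"
      using r r' by (intro circle_mean_comp_le_poisson_integral) auto
    moreover have "g \<circ> \<psi> = f \<circ> \<phi>"
      using \<open>0 < \<rho>\<close> by (auto simp: g_def \<psi>_def)
    ultimately show "circle_mean (f \<circ> \<phi>) r \<le> integral {0..1}
        (\<lambda>t. (cmod (f (of_real \<rho> * cis2pi t)))\<^sup>2 * poisson_kernel (\<phi> 0 / of_real \<rho>) (cis2pi t))"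
      by (simp add: g_def \<psi>_def)
  qed
qed

lemma summable_suminf_le_of_abel_means:
  fixes x :: "nat \<Rightarrow> real"
  assumes nonneg: "\<And>n. 0 \<le> x n"
    and sums: "\<And>r. 0 \<le> r \<Longrightarrow> r < 1 \<Longrightarrow> (\<lambda>n. x n * r ^ (2 * n)) sums m r"
    and bound: "\<And>r. 0 \<le> r \<Longrightarrow> r < 1 \<Longrightarrow> m r \<le> B"
  shows "summable x \<and> suminf x \<le> B"
proof -
  have partial: "(\<Sum>n<k. x n) \<le> B" for k
  proof -
    have "eventually (\<lambda>r. (\<Sum>n<k. x n * r ^ (2 * n)) \<le> B) (at_left (1::real))"
      using eventually_at_left_real[of 0 "1::real"]
    proof (rule eventually_mono)
      fix r :: real assume "r \<in> {0<..<1}"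
      then have r: "0 \<le> r" "r < 1" by auto
      have "(\<Sum>n<k. x n * r ^ (2 * n)) \<le> (\<Sum>n. x n * r ^ (2 * n))"
        by (rule sum_le_suminf) (use sums[OF r] nonneg in \<open>auto simp: sums_iff\<close>)
      also have "\<dots> = m r" using sums[OF r] by (simp add: sums_iff)
      finally show "(\<Sum>n<k. x n * r ^ (2 * n)) \<le> B" using bound[OF r] by simp
    qed simp
    moreover have "((\<lambda>r. \<Sum>n<k. x n * r ^ (2 * n)) \<longlongrightarrow> (\<Sum>n<k. x n * 1 ^ (2 * n))) (at_left 1)"
      by (intro tendsto_intros)
    ultimately show ?thesis
      using tendsto_le[OF trivial_limit_at_left_real tendsto_const] by fastforce
  qed
  have "summable x" by (rule summableI_nonneg_bounded[OF nonneg partial])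
  then show ?thesis using suminf_le_const partial by blast
qed

lemma one_plus_div_one_minus_mono:
  fixes s q :: real
  assumes "0 \<le> s" "s \<le> q" "q < 1"
  shows "(1 + s) / (1 - s) \<le> (1 + q) / (1 - q)"
proof -
  have "(1 + s) * (1 - q) \<le> (1 + q) * (1 - s)" using assms by (simp add: algebra_simps)
  then show ?thesis using assms by (simp add: divide_simps)
qed

lemma poisson_kernel_le_max_minus_dist:
  assumes q: "0 < q" "q < 1" and z0: "cmod z0 = 1" and z: "cmod z = 1"
  shows "poisson_kernel (of_real q * z0) z
           \<le> (1 + q) / (1 - q) - (1 + q) / (1 - q) * q * (cmod (z - z0))\<^sup>2 / 4"
proof -
  define D where "D = (cmod (z - of_real q * z0))\<^sup>2"
  define E where "E = (cmod (z - z0))\<^sup>2"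
  have "D - q * E = (1 - q) * (cmod z)\<^sup>2 + (q\<^sup>2 - q) * (cmod z0)\<^sup>2"
    unfolding D_def E_def cmod_power2 by (simp add: algebra_simps power2_eq_square)
  then have DE: "D = (1 - q)\<^sup>2 + q * E" using z z0 by (simp add: algebra_simps power2_eq_square)
  have "z \<noteq> of_real q * z0" using q z z0 by (auto simp: norm_mult)
  then have "0 < D" unfolding D_def by simp
  have "cmod (z - of_real q * z0) \<le> 2"
    using norm_triangle_ineq4[of z "of_real q * z0"] q z z0 by (simp add: norm_mult)
  then have "D \<le> 2\<^sup>2" unfolding D_def by (intro power_mono) auto
  then have "D \<le> 4" by simp
  have "0 \<le> q * E" using q by (simp add: E_def)
  then have "(1 - q)\<^sup>2 \<le> D * (1 - q * E / 4)"
    using DE mult_left_mono[OF \<open>D \<le> 4\<close>, of "q * E"] by (simp add: algebra_simps)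
  then have "(1 + q) / (1 - q) * ((1 - q)\<^sup>2 / D) \<le> (1 + q) / (1 - q) * (1 - q * E / 4)"
    using q \<open>0 < D\<close> by (intro mult_left_mono) (auto simp: divide_le_eq mult.commute)
  moreover have "(1 + q) / (1 - q) * ((1 - q)\<^sup>2 / D) = (1 - q\<^sup>2) / D"
    using q \<open>0 < D\<close> by (simp add: power2_eq_square field_simps)
  moreover have "poisson_kernel (of_real q * z0) z = (1 - q\<^sup>2) / D"
    unfolding poisson_kernel_def D_def using q z0 by (simp add: norm_mult)
  ultimately show ?thesis unfolding E_def by (simp add: algebra_simps)
qed

definition dist_weighted_circle_mean :: "(complex \<Rightarrow> complex) \<Rightarrow> complex \<Rightarrow> real \<Rightarrow> real" where
  "dist_weighted_circle_mean f z0 \<rho> =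
     integral {0..1} (\<lambda>t. (cmod (f (of_real \<rho> * cis2pi t)))\<^sup>2 * (cmod (cis2pi t - z0))\<^sup>2)"

lemma circle_mean_mult_linear_le:
  assumes f: "f holomorphic_on ball 0 1" and \<rho>: "0 \<le> \<rho>" "\<rho> < 1"
  shows "circle_mean (\<lambda>z. f z * (z - z0)) \<rho>
           \<le> 2 * dist_weighted_circle_mean f z0 \<rho> + 2 * (1 - \<rho>)\<^sup>2 * circle_mean f \<rho>"
proof -
  define u where "u t = (cmod (f (of_real \<rho> * cis2pi t)))\<^sup>2" for t
  have cont: "continuous_on {0..1} (\<lambda>t. f (of_real \<rho> * cis2pi t))"
    using holomorphic_on_imp_continuous_on[OF f] \<rho> by (rule continuous_on_comp_circle)
  have pointwise: "u t * (cmod (of_real \<rho> * cis2pi t - z0))\<^sup>2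
      \<le> 2 * (u t * (cmod (cis2pi t - z0))\<^sup>2) + 2 * (1 - \<rho>)\<^sup>2 * u t" for t
  proof -
    have "of_real \<rho> * cis2pi t - z0 = (cis2pi t - z0) - of_real (1 - \<rho>) * cis2pi t"
      by (simp add: algebra_simps)
    then have "cmod (of_real \<rho> * cis2pi t - z0)
        \<le> cmod (cis2pi t - z0) + cmod (of_real (1 - \<rho>) * cis2pi t)"
      by (metis norm_triangle_ineq4)
    also have "cmod (of_real (1 - \<rho>) * cis2pi t) = 1 - \<rho>"
      using \<rho> by (simp add: norm_mult del: of_real_diff)
    finally have "cmod (of_real \<rho> * cis2pi t - z0) \<le> cmod (cis2pi t - z0) + (1 - \<rho>)" .
    then have "(cmod (of_real \<rho> * cis2pi t - z0))\<^sup>2 \<le> (cmod (cis2pi t - z0) + (1 - \<rho>))\<^sup>2"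
      by (intro power_mono) auto
    also have "\<dots> \<le> 2 * (cmod (cis2pi t - z0))\<^sup>2 + 2 * (1 - \<rho>)\<^sup>2"
      using sum_squares_bound[of "cmod (cis2pi t - z0)" "1 - \<rho>"]
      by (simp add: power2_eq_square algebra_simps)
    finally show ?thesis
      using mult_left_mono[of _ _ "u t"] by (fastforce simp: u_def algebra_simps)
  qed
  have "circle_mean (\<lambda>z. f z * (z - z0)) \<rho> =
      integral {0..1} (\<lambda>t. u t * (cmod (of_real \<rho> * cis2pi t - z0))\<^sup>2)"
    unfolding circle_mean_def u_def by (simp add: norm_mult power_mult_distrib)
  also have "\<dots> \<le> integral {0..1} (\<lambda>t. 2 * (u t * (cmod (cis2pi t - z0))\<^sup>2) + 2 * (1 - \<rho>)\<^sup>2 * u t)"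
    using cont pointwise unfolding u_def
    by (intro integral_le integrable_continuous_interval continuous_intros) auto
  also have "\<dots> = 2 * dist_weighted_circle_mean f z0 \<rho> + 2 * (1 - \<rho>)\<^sup>2 * circle_mean f \<rho>"
    using cont unfolding dist_weighted_circle_mean_def circle_mean_def u_def
    by (subst integral_add) (auto intro!: integrable_continuous_interval continuous_intros)
  finally show ?thesis .
qed

lemma poisson_integral_dilation_le:
  assumes f: "f holomorphic_on ball 0 1" and \<rho>: "0 \<le> \<rho>" "\<rho> < 1"
    and q: "0 < q" "q < 1" and z0: "cmod z0 = 1"
  shows "integral {0..1} (\<lambda>t. (cmod (f (of_real \<rho> * cis2pi t)))\<^sup>2 * poisson_kernel (of_real q * z0) (cis2pi t))
    \<le> (1 + q) / (1 - q) * circle_mean f \<rho> - (1 + q) / (1 - q) * q / 4 * dist_weighted_circle_mean f z0 \<rho>"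
proof -
  define u where "u t = (cmod (f (of_real \<rho> * cis2pi t)))\<^sup>2" for t
  define c where "c = (1 + q) / (1 - q)"
  have cont: "continuous_on {0..1} (\<lambda>t. f (of_real \<rho> * cis2pi t))"
    using holomorphic_on_imp_continuous_on[OF f] \<rho> by (rule continuous_on_comp_circle)
  have "cmod (of_real q * z0) < 1" using q z0 by (simp add: norm_mult)
  have "integral {0..1} (\<lambda>t. u t * poisson_kernel (of_real q * z0) (cis2pi t))
      \<le> integral {0..1} (\<lambda>t. c * u t - c * q / 4 * (u t * (cmod (cis2pi t - z0))\<^sup>2))"
  proof (rule integral_le)
    show "(\<lambda>t. u t * poisson_kernel (of_real q * z0) (cis2pi t)) integrable_on {0..1}"
      unfolding u_def using cont continuous_on_poisson_kernel_circle[OF \<open>cmod (of_real q * z0) < 1\<close>]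
      by (intro integrable_continuous_interval continuous_intros)
    show "(\<lambda>t. c * u t - c * q / 4 * (u t * (cmod (cis2pi t - z0))\<^sup>2)) integrable_on {0..1}"
      unfolding u_def using cont by (intro integrable_continuous_interval continuous_intros)
    fix t
    have "u t * poisson_kernel (of_real q * z0) (cis2pi t)
        \<le> u t * (c - c * q * (cmod (cis2pi t - z0))\<^sup>2 / 4)"
      unfolding c_def using poisson_kernel_le_max_minus_dist[OF q z0 norm_cis2pi]
      by (rule mult_left_mono) (simp add: u_def)
    then show "u t * poisson_kernel (of_real q * z0) (cis2pi t)
        \<le> c * u t - c * q / 4 * (u t * (cmod (cis2pi t - z0))\<^sup>2)"
      by (simp add: algebra_simps)
  qed
  also have "\<dots> = c * circle_mean f \<rho> - c * q / 4 * dist_weighted_circle_mean f z0 \<rho>"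
    using cont unfolding dist_weighted_circle_mean_def circle_mean_def u_def
    by (subst integral_diff) (auto intro!: integrable_continuous_interval continuous_intros)
  finally show ?thesis unfolding u_def c_def .
qed

text \<open>A nonzero \<open>f\<close> cannot concentrate its mass near a point of the unit circle: compare with the
  circle means of \<open>f z * (z - z\<^sub>0)\<close>, which increase with the radius.\<close>
lemma dist_weighted_circle_mean_eventually_ge:
  assumes f: "f holomorphic_on ball 0 1" "summable (\<lambda>n. (cmod (taylor_coeff f n))\<^sup>2)"
    and z1: "z1 \<in> ball 0 1" "f z1 \<noteq> 0" and z0: "cmod z0 = 1"
  obtains m where "0 < m" and "eventually (\<lambda>\<rho>. m \<le> dist_weighted_circle_mean f z0 \<rho>) (at_left 1)"
proof
  define N where "N = (\<Sum>n. (cmod (taylor_coeff f n))\<^sup>2)"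
  define m0 where "m0 = circle_mean (\<lambda>z. f z * (z - z0)) (1/2)"
  have "f z1 * (z1 - z0) \<noteq> 0" using z1 z0 by auto
  then show "0 < m0 / 4" unfolding m0_def using z1(1)
    by (simp, intro circle_mean_pos[of _ z1] holomorphic_intros f(1)) auto
  have "((\<lambda>\<rho>. (1 - \<rho>)\<^sup>2 * N) \<longlongrightarrow> (1 - 1)\<^sup>2 * N) (at_left (1::real))"
    by (intro tendsto_intros)
  then have "eventually (\<lambda>\<rho>. (1 - \<rho>)\<^sup>2 * N < m0 / 4) (at_left 1)"
    using \<open>0 < m0 / 4\<close> by (intro order_tendstoD) auto
  moreover have "eventually (\<lambda>\<rho>. \<rho> \<in> {1/2 <..< 1}) (at_left (1::real))"
    by (intro eventually_at_left_real) auto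
  ultimately show "eventually (\<lambda>\<rho>. m0 / 4 \<le> dist_weighted_circle_mean f z0 \<rho>) (at_left 1)"
  proof eventually_elim
    case (elim \<rho>)
    then have \<rho>: "1/2 < \<rho>" "\<rho> < 1" by auto
    have "m0 \<le> circle_mean (\<lambda>z. f z * (z - z0)) \<rho>"
      unfolding m0_def using \<rho> by (intro circle_mean_mono holomorphic_intros f(1)) auto
    also have "\<dots> \<le> 2 * dist_weighted_circle_mean f z0 \<rho> + 2 * (1 - \<rho>)\<^sup>2 * circle_mean f \<rho>"
      using f(1) \<rho> by (intro circle_mean_mult_linear_le) auto
    also have "\<dots> \<le> 2 * dist_weighted_circle_mean f z0 \<rho> + 2 * (1 - \<rho>)\<^sup>2 * N"
      unfolding N_def using f \<rho>
      by (intro add_left_mono mult_left_mono circle_mean_le_suminf) auto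
    finally show ?case using elim by simp
  qed
qed

lemma circle_mean_comp_le_minus_gap:
  assumes \<phi>: "\<phi> holomorphic_on ball 0 1" "\<phi> ` ball 0 1 \<subseteq> ball 0 1" "\<phi> 0 \<noteq> 0"
    and f: "f holomorphic_on ball 0 1" "summable (\<lambda>n. (cmod (taylor_coeff f n))\<^sup>2)"
    and z1: "z1 \<in> ball 0 1" "f z1 \<noteq> 0"
  obtains \<delta> where "0 < \<delta>" and "\<And>r. 0 \<le> r \<Longrightarrow> r < 1 \<Longrightarrow> circle_mean (f \<circ> \<phi>) r \<le>
      (1 + cmod (\<phi> 0)) / (1 - cmod (\<phi> 0)) * (\<Sum>n. (cmod (taylor_coeff f n))\<^sup>2) - \<delta>"
proof -
  define s where "s = cmod (\<phi> 0)"
  define c where "c q = (1 + q) / (1 - q)" for q :: real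
  define N where "N = (\<Sum>n. (cmod (taylor_coeff f n))\<^sup>2)"
  define z0 where "z0 = \<phi> 0 / of_real s"
  have "\<phi> 0 \<in> ball 0 1" using \<phi>(2) by (simp add: image_subset_iff)
  then have s: "0 < s" "s < 1" using \<phi>(3) by (auto simp: s_def)
  have z0: "cmod z0 = 1" using s by (simp add: z0_def s_def norm_divide)
  obtain m where "0 < m" and mass: "eventually (\<lambda>\<rho>. m \<le> dist_weighted_circle_mean f z0 \<rho>) (at_left 1)"
    using dist_weighted_circle_mean_eventually_ge[OF f z1 z0] by blast
  have "0 < c s" using s by (simp add: c_def)
  show ?thesis
  proof (rule that)
    show "0 < c s * s * m / 4" using \<open>0 < c s\<close> s \<open>0 < m\<close> by simp
    fix r :: real assume r: "0 \<le> r" "r < 1"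
    obtain K where "K < 1" and subord: "\<And>\<rho>. K < \<rho> \<Longrightarrow> \<rho> < 1 \<Longrightarrow> circle_mean (f \<circ> \<phi>) r \<le>
        integral {0..1} (\<lambda>t. (cmod (f (of_real \<rho> * cis2pi t)))\<^sup>2 * poisson_kernel (\<phi> 0 / of_real \<rho>) (cis2pi t))"
      using dilated_subordination[OF \<phi>(1,2) f(1) r] by blast
    have "eventually (\<lambda>\<rho>. \<rho> \<in> {max K s <..< 1}) (at_left (1::real))"
      using \<open>K < 1\<close> s by (intro eventually_at_left_real) auto
    with mass have "eventually (\<lambda>\<rho>. circle_mean (f \<circ> \<phi>) r \<le> c (s / \<rho>) * N - c s * s * m / 4)
        (at_left 1)"
    proof eventually_elim
      case (elim \<rho>)
      then have \<rho>: "K < \<rho>" "s < \<rho>" "\<rho> < 1" by auto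
      define q where "q = s / \<rho>"
      have q: "0 < q" "q < 1" "s \<le> q" using s \<rho> by (auto simp: q_def field_simps)
      have "\<phi> 0 / of_real \<rho> = of_real q * z0"
        using s \<rho> by (simp add: q_def z0_def s_def field_simps)
      then have "circle_mean (f \<circ> \<phi>) r
          \<le> c q * circle_mean f \<rho> - c q * q / 4 * dist_weighted_circle_mean f z0 \<rho>"
        using subord[OF \<rho>(1,3)] poisson_integral_dilation_le[OF f(1) _ \<rho>(3) q(1,2) z0] s \<rho>
        unfolding c_def by fastforce
      moreover have "c s \<le> c q" unfolding c_def using s q by (intro one_plus_div_one_minus_mono) auto
      then have "c s * s * m \<le> c q * q * dist_weighted_circle_mean f z0 \<rho>"
        using \<open>0 < c s\<close> s q \<open>0 < m\<close> elim by (intro mult_mono) auto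
      moreover have "c q * circle_mean f \<rho> \<le> c q * N"
        unfolding N_def using f \<rho> \<open>c s \<le> c q\<close> \<open>0 < c s\<close> s
        by (intro mult_left_mono circle_mean_le_suminf) auto
      ultimately show ?case unfolding q_def[symmetric] by (simp add: mult_ac)
    qed
    moreover have "((\<lambda>\<rho>. c (s / \<rho>) * N - c s * s * m / 4) \<longlongrightarrow> c (s / 1) * N - c s * s * m / 4)
        (at_left 1)"
      unfolding c_def using s by (intro tendsto_intros) auto
    ultimately show "circle_mean (f \<circ> \<phi>) r \<le> (1 + cmod (\<phi> 0)) / (1 - cmod (\<phi> 0)) *
        (\<Sum>n. (cmod (taylor_coeff f n))\<^sup>2) - c s * s * m / 4"
      using tendsto_le[OF trivial_limit_at_left_real _ tendsto_const] unfolding c_def s_def N_def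
      by fastforce
  qed
qed

lemma H2_norm_comp_less:
  assumes \<phi>: "\<phi> holomorphic_on ball 0 1" "\<phi> ` ball 0 1 \<subseteq> ball 0 1" "\<phi> 0 \<noteq> 0"
    and f: "f holomorphic_on ball 0 1" "summable (\<lambda>n. (cmod (taylor_coeff f n))\<^sup>2)"
    and z1: "z1 \<in> ball 0 1" "f z1 \<noteq> 0"
  shows "H2_norm (f \<circ> \<phi>) < sqrt ((1 + cmod (\<phi> 0)) / (1 - cmod (\<phi> 0))) * H2_norm f"
proof -
  define c where "c = (1 + cmod (\<phi> 0)) / (1 - cmod (\<phi> 0))"
  obtain \<delta> where "0 < \<delta>" and gap: "\<And>r. 0 \<le> r \<Longrightarrow> r < 1 \<Longrightarrow>
      circle_mean (f \<circ> \<phi>) r \<le> c * (\<Sum>n. (cmod (taylor_coeff f n))\<^sup>2) - \<delta>"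
    unfolding c_def using circle_mean_comp_le_minus_gap[OF \<phi> f z1] by blast
  have "(f \<circ> \<phi>) holomorphic_on ball 0 1"
    by (rule holomorphic_on_compose_gen[OF \<phi>(1) f(1) \<phi>(2)])
  then have "(\<Sum>n. (cmod (taylor_coeff (f \<circ> \<phi>) n))\<^sup>2) \<le> c * (\<Sum>n. (cmod (taylor_coeff f n))\<^sup>2) - \<delta>"
    using summable_suminf_le_of_abel_means[OF _ circle_mean_sums gap] by auto
  then have "H2_norm (f \<circ> \<phi>) < sqrt (c * (\<Sum>n. (cmod (taylor_coeff f n))\<^sup>2))"
    unfolding H2_norm_def using \<open>0 < \<delta>\<close> by simp
  also have "\<dots> = sqrt c * H2_norm f"
    by (simp add: H2_norm_def real_sqrt_mult)
  finally show ?thesis unfolding c_def .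
qed

theorem theorem2p1:
  fixes \<phi> f :: "complex \<Rightarrow> complex"
  assumes "inner_function \<phi>"
    and "\<phi> 0 \<noteq> 0"
    and "f \<in> H2"
  shows "H2_norm (f \<circ> \<phi>) = sqrt ((1 + cmod (\<phi> 0)) / (1 - cmod (\<phi> 0))) * H2_norm f
         \<longleftrightarrow> (\<forall>z\<in>unit_disc. f z = 0)"
proof -
  have \<phi>: "\<phi> holomorphic_on ball 0 1" "\<phi> ` ball 0 1 \<subseteq> ball 0 1"
    using assms(1) unfolding inner_function_def by auto
  have f: "f holomorphic_on ball 0 1" "summable (\<lambda>n. (cmod (taylor_coeff f n))\<^sup>2)"
    using assms(3) unfolding H2_def by auto
  show ?thesis
  proof
    assume "H2_norm (f \<circ> \<phi>) = sqrt ((1 + cmod (\<phi> 0)) / (1 - cmod (\<phi> 0))) * H2_norm f"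
    then show "\<forall>z\<in>unit_disc. f z = 0"
      using H2_norm_comp_less[OF \<phi> assms(2) f] by force
  next
    assume zero: "\<forall>z\<in>unit_disc. f z = 0"
    then have "(f \<circ> \<phi>) z = 0" if "z \<in> ball 0 1" for z
      using \<phi>(2) that by (simp add: image_subset_iff)
    then have "taylor_coeff (f \<circ> \<phi>) n = 0" "taylor_coeff f n = 0" for n
      using zero by (auto intro: taylor_coeff_eq_0)
    then show "H2_norm (f \<circ> \<phi>) = sqrt ((1 + cmod (\<phi> 0)) / (1 - cmod (\<phi> 0))) * H2_norm f"
      by (simp add: H2_norm_def)
  qed
qed

end
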